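(* For every integer $k\geq0$, \[ \mathrm{Res}_{z=0}\, (\wp(z) - 4 G_2)^{k+\frac{1}{2}} = 2 \left[ \sqrt{ \wp(p,q) - 4G_2(q) }^{\,2k+1} \right]_{p^0} + O(q^{k+1}), \] as power series in $q$.
   Context: For even $k\geq2$, $G_k(q)=-\frac{B_k}{2k}+\sum_{n\geq1}\sum_{d|n}d^{k-1}q^n$ ($B_k$ Bernoulli numbers), and $G_k:=0$ for odd $k$. Left side: $\wp(z)=z^{-2}+2\sum_{k\geq4}G_k\frac{z^{k-2}}{(k-2)!}$ as a formal Laurent series in $z$ with coefficients power series in $q$; $(\wp-4G_2)^{1/2}$ is the unique formal square root of $\wp(z)-4G_2$ of the form $z^{-1}+O(z)$, $(\wp-4G_2)^{k+\frac12}:=(\wp-4G_2)^k(\wp-4G_2)^{1/2}$, and $\mathrm{Res}_{z=0}$ is the $z^{-1}$-coefficient. Right side: $\wp(p,q)=\frac{1}{12}+\frac{p}{(1-p)^2}+\sum_{d\geq1}\sum_{k|d}k(p^k-2+p^{-k})q^d$; $\sqrt{\wp(p,q)-4G_2(q)}$ is the unique power series in $q$ with coefficients rational functions of $p$ whose square is $\wp(p,q)-4G_2(q)$ and whose $q^0$-coefficient is $\frac12\frac{p+1}{p-1}$; $[\cdot]_{p^0}$ expands each $q$-coefficient as a Laurent series in $p^{-1}$ (region $|p|>1$) and takes its constant term. *)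

theory Defs
  imports "HOL-Computational_Algebra.Formal_Power_Series"
          "HOL-Computational_Algebra.Formal_Laurent_Series"
begin

text \<open>Bernoulli numbers (convention B_0 = 1, B_1 = -1/2, B_2 = 1/6), via the
  standard recursion  sum_{j<=n} binom(n+1,j) B_j = 0  for n >= 1.\<close>
fun bernoulli_num :: "nat \<Rightarrow> rat" where
  "bernoulli_num n =
     (if n = 0 then 1
      else - (\<Sum>j<n. of_nat ((n + 1) choose j) * bernoulli_num j) / of_nat (n + 1))"

declare bernoulli_num.simps [simp del]

definition G :: "nat \<Rightarrow> rat fps" where
  "G k = (if even k \<and> k \<ge> 2 then
            fps_const (- bernoulli_num k / (2 * of_nat k))
            + Abs_fps (\<lambda>n. if n = 0 then 0
                            else (\<Sum>d\<in>{d. d dvd n}. of_nat d ^ (k - 1)))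
          else 0)"

text \<open>Weierstrass wp(z) as a formal Laurent series in z whose coefficients are
  power series in q:  z^-2 + 2 sum_{k>=4} G_k z^(k-2)/(k-2)!.\<close>
definition wp_z :: "rat fps fls" where
  "wp_z = fls_X_intpow (-2)
          + fps_to_fls (Abs_fps (\<lambda>m. if m \<ge> 2 then fps_const (2 / fact m) * G (m + 2)
                                       else 0))"

definition sqrt_wp_z :: "rat fps fls" where
  "sqrt_wp_z = (THE s. s ^ 2 = wp_z - 4 * fls_const (G 2)
                      \<and> (\<forall>n < -1. fls_nth s n = 0) \<and> fls_nth s (-1) = 1 \<and> fls_nth s 0 = 0)"

definition wp_z_half_pow :: "nat \<Rightarrow> rat fps fls" where
  "wp_z_half_pow k = (wp_z - 4 * fls_const (G 2)) ^ k * sqrt_wp_z"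

definition LHS :: "nat \<Rightarrow> rat fps" where
  "LHS k = fls_residue (wp_z_half_pow k)"

text \<open>Every rational function of p is represented by its
  expansion in the region |p| > 1, i.e. as a formal Laurent series in p^-1.
  We write x = p^-1 for the Laurent variable, so p itself is the element
  x^-1 = fls_X_inv of the field rat fls; rational expressions in p, evaluated
  in this field, are exactly their Laurent expansions in p^-1.\<close>
definition pvar :: "rat fls" where
  "pvar = fls_X_inv"

definition wp_pq :: "rat fls fps" where
  "wp_pq = Abs_fps (\<lambda>d. if d = 0 then 1 / 12 + pvar / (1 - pvar) ^ 2
                         else (\<Sum>k\<in>{k. k dvd d}.
                                 of_nat k * (pvar ^ k - 2 + inverse (pvar ^ k))))"

definition G2_pq :: "rat fls fps" where
  "G2_pq = Abs_fps (\<lambda>n. fls_const (fps_nth (G 2) n))"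

definition sqrt_wp_pq :: "rat fls fps" where
  "sqrt_wp_pq = (THE s. s ^ 2 = wp_pq - 4 * G2_pq
                       \<and> fps_nth s 0 = (pvar + 1) / (pvar - 1) / 2)"

definition const_term_p :: "rat fls fps \<Rightarrow> rat fps" where
  "const_term_p F = Abs_fps (\<lambda>n. fls_nth (fps_nth F n) 0)"

definition RHS :: "nat \<Rightarrow> rat fps" where
  "RHS k = 2 * const_term_p (sqrt_wp_pq ^ (2 * k + 1))"

end

theory Submission
  imports Defs
begin

text \<open>Both sides come from one computation. For \<open>P = e\<^sup>z\<close>, resp. \<open>P = p\<close>, the series
  \<open>\<wp> - 4 G\<^sub>2\<close> equals \<open>s\<^sup>2 + W(t)\<close> with \<open>s = (P + 1)/(2(P - 1))\<close>, \<open>t = P + P\<^sup>-\<^sup>1 - 2\<close>, and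
  \<open>W\<close> a power series in \<open>q\<close> without constant term whose coefficients are the same
  polynomials in \<open>t\<close> on both sides (Dickson polynomials write \<open>P\<^sup>k + P\<^sup>-\<^sup>k\<close> in terms of \<open>t\<close>).
  So both square roots are \<open>s (1 + W(t)/s\<^sup>2)\<^sup>1\<^sup>/\<^sup>2\<close>, and for \<open>n \<le> k\<close> the \<open>q\<^sup>n\<close>-coefficient of
  the \<open>(2k+1)\<close>-st power is a combination of the monomials \<open>t\<^sup>i s\<^sup>2\<^sup>l\<^sup>+\<^sup>1\<close> with the same rational
  coefficients on both sides. The residue in \<open>z\<close> and the constant term in \<open>p\<close> are linear forms
  killing the image of a derivation \<open>D\<close> with \<open>D P = P\<close>; as \<open>D s = 1/4 - s\<^sup>2\<close> and
  \<open>D t = 2 t s\<close>, each form sends \<open>t\<^sup>i s\<^sup>2\<^sup>l\<^sup>+\<^sup>1\<close> to \<open>binom(l, i) 4\<^sup>i\<^sup>-\<^sup>l\<close> times its value on \<open>s\<close>,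
  which is \<open>1\<close> for the residue and \<open>1/2\<close> for the constant term.\<close>

section \<open>Square roots of power series\<close>

lemma fps_square_eq_imp_eq:
  fixes A B :: "'a::field_char_0 fps"
  assumes "A ^ 2 = B ^ 2" and "A $ 0 = B $ 0" and "B $ 0 \<noteq> 0"
  shows "A = B"
proof -
  have "(A - B) * (A + B) = 0"
    using assms(1) by (simp add: algebra_simps power2_eq_square)
  moreover have "(A + B) $ 0 \<noteq> 0"
    using assms(2,3) by simp
  then have "A + B \<noteq> 0"
    by (metis fps_zero_nth)
  ultimately show ?thesis by simp
qed

definition sqrt_series :: "'a::field_char_0 \<Rightarrow> 'a fps \<Rightarrow> 'a fps" where
  "sqrt_series s U = fps_const s * (fps_binomial (1/2) oo (fps_const (inverse (s ^ 2)) * U))"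

lemma sqrt_series_nth_0 [simp]: "sqrt_series s U $ 0 = s"
  by (simp add: sqrt_series_def)

context
  fixes s :: "'a::field_char_0" and U :: "'a fps"
  assumes s_nonzero: "s \<noteq> 0" and U_nth_0: "U $ 0 = 0"
begin

lemma sqrt_series_power:
  "sqrt_series s U ^ m
     = fps_const (s ^ m) * (fps_binomial (of_nat m / 2) oo (fps_const (inverse (s ^ 2)) * U))"
  using U_nth_0
  by (simp add: sqrt_series_def power_mult_distrib fps_compose_power fps_binomial_power
      fps_const_power)

lemma sqrt_series_square: "sqrt_series s U ^ 2 = fps_const (s ^ 2) + U"
  using sqrt_series_power[of 2] U_nth_0 s_nonzero
  by (simp add: fps_binomial_1 fps_compose_add_distrib algebra_simps flip: fps_const_mult)

lemma sqrt_series_odd_power_nth: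
  assumes "n \<le> k"
  shows "(sqrt_series s U ^ (2 * k + 1)) $ n
           = (\<Sum>j=0..n. (of_nat (2 * k + 1) / 2 gchoose j) * ((U ^ j) $ n * s ^ (2 * (k - j) + 1)))"
proof -
  have pow: "s ^ (2 * k + 1) * inverse (s ^ 2) ^ j = s ^ (2 * (k - j) + 1)" if "j \<le> n" for j
  proof -
    have "2 * k + 1 = (2 * (k - j) + 1) + 2 * j"
      using that assms by simp
    then have "s ^ (2 * k + 1) = s ^ (2 * (k - j) + 1) * (s ^ 2) ^ j"
      by (metis power_add power_mult)
    then show ?thesis using s_nonzero by (simp add: field_simps)
  qed
  have "(sqrt_series s U ^ (2 * k + 1)) $ n
          = (\<Sum>j=0..n. s ^ (2 * k + 1) * ((of_nat (2 * k + 1) / 2 gchoose j)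
               * (inverse (s ^ 2) ^ j * (U ^ j) $ n)))"
    unfolding sqrt_series_power fps_mult_left_const_nth fps_compose_nth sum_distrib_left
    by (simp only: power_mult_distrib fps_const_power fps_mult_left_const_nth fps_binomial_nth)
  also have "\<dots> = (\<Sum>j=0..n. (of_nat (2 * k + 1) / 2 gchoose j) * ((U ^ j) $ n * s ^ (2 * (k - j) + 1)))"
  proof (intro sum.cong refl)
    fix j assume "j \<in> {0..n}"
    then have "s ^ (2 * (k - j) + 1) = s ^ (2 * k + 1) * inverse (s ^ 2) ^ j"
      using pow[of j] by (simp only: atLeastAtMost_iff)
    then show "s ^ (2 * k + 1) * ((of_nat (2 * k + 1) / 2 gchoose j) * (inverse (s ^ 2) ^ j * (U ^ j) $ n))
             = (of_nat (2 * k + 1) / 2 gchoose j) * ((U ^ j) $ n * s ^ (2 * (k - j) + 1))"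
      by (simp only: ac_simps)
  qed
  finally show ?thesis .
qed

end

section \<open>Constants and polynomials in Laurent series\<close>

lemma fls_const_sum: "fls_const (\<Sum>i\<in>A. f i) = (\<Sum>i\<in>A. fls_const (f i))"
  by (induction A rule: infinite_finite_induct) (simp_all flip: fls_plus_const)

lemma fls_const_prod: "fls_const (\<Prod>i\<in>A. f i) = (\<Prod>i\<in>A. fls_const (f i))"
  by (induction A rule: infinite_finite_induct) (simp_all flip: fls_const_mult_const)

lemma fls_const_gchoose:
  fixes a :: "'a::field_char_0"
  shows "fls_const a gchoose n = fls_const (a gchoose n)"
proof -
  have "fls_const a - of_nat i = fls_const (a - of_nat i)" for i
    by (simp add: fls_of_nat flip: fls_minus_const)
  moreover have "(fact n :: 'a fls) = fls_const (fact n)"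
    by (metis fls_of_nat of_nat_fact)
  ultimately show ?thesis
    unfolding gbinomial_prod_rev
    by (simp only: fls_const_prod[symmetric] fls_const_divide_const)
qed

lemma fls_one_divide_numeral: "(1 / numeral k :: 'a::field fls) = fls_const (1 / numeral k)"
  by (simp flip: fls_const_divide_const)

lemma fls_numeral_mult_const: "numeral k * fls_const c = fls_const (numeral k * c)"
  by (simp flip: fls_const_mult_const)

definition fls_poly :: "'a::comm_ring_1 poly \<Rightarrow> 'a fls \<Rightarrow> 'a fls" where
  "fls_poly P t = poly (map_poly fls_const P) t"

lemma map_poly_fls_const_add: "map_poly fls_const (P + Q) = map_poly fls_const P + map_poly fls_const Q"
  by (rule poly_eqI) (simp add: coeff_map_poly fls_plus_const)

lemma map_poly_fls_const_mult: "map_poly fls_const (P * Q) = map_poly fls_const P * map_poly fls_const Q"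
  by (rule poly_eqI) (simp add: coeff_map_poly coeff_mult fls_const_sum)

lemma map_poly_fls_const_uminus: "map_poly fls_const (- P) = - map_poly fls_const P"
  by (rule poly_eqI) (simp add: coeff_map_poly)

lemma fls_poly_add [simp]: "fls_poly (P + Q) t = fls_poly P t + fls_poly Q t"
  by (simp add: fls_poly_def map_poly_fls_const_add)

lemma fls_poly_mult [simp]: "fls_poly (P * Q) t = fls_poly P t * fls_poly Q t"
  by (simp add: fls_poly_def map_poly_fls_const_mult)

lemma fls_poly_uminus [simp]: "fls_poly (- P) t = - fls_poly P t"
  by (simp add: fls_poly_def map_poly_fls_const_uminus)

lemma fls_poly_diff [simp]: "fls_poly (P - Q) t = fls_poly P t - fls_poly Q t"
  using fls_poly_add[of P "- Q" t] by simp

lemma fls_poly_0 [simp]: "fls_poly 0 t = 0"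
  by (simp add: fls_poly_def)

lemma fls_poly_1 [simp]: "fls_poly 1 t = 1"
  by (simp add: fls_poly_def)

lemma fls_poly_pCons [simp]: "fls_poly (pCons a P) t = fls_const a + t * fls_poly P t"
  by (cases "a = 0 \<and> P = 0") (auto simp: fls_poly_def map_poly_pCons)

lemma fls_poly_sum: "fls_poly (\<Sum>i\<in>A. f i) t = (\<Sum>i\<in>A. fls_poly (f i) t)"
  by (induction A rule: infinite_finite_induct) simp_all

lemma fls_poly_smult: "fls_poly (smult c P) t = fls_const c * fls_poly P t"
  using fls_poly_mult[of "[:c:]" P t] by simp

lemma fls_poly_altdef: "fls_poly P t = (\<Sum>i\<le>degree P. fls_const (coeff P i) * t ^ i)"
  by (simp add: fls_poly_def poly_altdef degree_map_poly coeff_map_poly)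

definition fps_poly_eval :: "'a::comm_ring_1 poly fps \<Rightarrow> 'a fls \<Rightarrow> 'a fls fps" where
  "fps_poly_eval F t = Abs_fps (\<lambda>n. fls_poly (F $ n) t)"

lemma fps_poly_eval_nth [simp]: "fps_poly_eval F t $ n = fls_poly (F $ n) t"
  by (simp add: fps_poly_eval_def)

lemma fps_poly_eval_mult: "fps_poly_eval (A * B) t = fps_poly_eval A t * fps_poly_eval B t"
  by (rule fps_ext) (simp add: fps_mult_nth fls_poly_sum)

lemma fps_poly_eval_power: "fps_poly_eval (F ^ n) t = fps_poly_eval F t ^ n"
proof (induction n)
  case 0
  show ?case by (rule fps_ext) simp
qed (simp_all add: fps_poly_eval_mult)

section \<open>Linear forms killing a logarithmic derivation\<close>

text \<open>For \<open>P = e\<^sup>z\<close> these are \<open>coth(z/2)/2\<close> and \<open>4 sinh(z/2)\<^sup>2\<close>.\<close>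

definition half_coth :: "'a::field \<Rightarrow> 'a" where
  "half_coth P = (P + 1) / (P - 1) / 2"

definition four_sinh_sq :: "'a::field \<Rightarrow> 'a" where
  "four_sinh_sq P = P + inverse P - 2"

lemma four_sinh_sq_half_coth:
  fixes P :: "'a::field_char_0"
  assumes "P \<noteq> 0" and "P \<noteq> 1"
  shows "four_sinh_sq P * (1/4 - half_coth P ^ 2) = -1"
proof -
  define u where "u = inverse (P - 1)"
  have "P * inverse P = 1" "(P - 1) * u = 1" "2 * inverse 2 = (1::'a)"
    using assms by (simp_all add: u_def)
  moreover have "half_coth P = (P + 1) * u * inverse 2"
    by (simp add: half_coth_def u_def field_simps)
  ultimately show ?thesis
    unfolding four_sinh_sq_def by algebra
qed

lemma half_coth_conv_inverse:
  fixes P :: "'a::field_char_0"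
  assumes "P \<noteq> 1"
  shows "half_coth P = 1/2 + inverse (P - 1)"
proof -
  have "P - 1 \<noteq> 0" using assms by simp
  then show ?thesis by (simp add: half_coth_def field_simps)
qed

lemma half_coth_square:
  fixes P :: "'a::field_char_0"
  assumes "P \<noteq> 1"
  shows "half_coth P ^ 2 = 1/4 + P / (1 - P) ^ 2"
proof -
  define u where "u = inverse (P - 1)"
  have u: "(P - 1) * u = 1"
    using assms by (simp add: u_def)
  have half_coth: "half_coth P = (P + 1) * u / 2"
    unfolding half_coth_def u_def by (simp only: divide_inverse)
  have "half_coth P ^ 2 = ((P + 1) * u) ^ 2 / 4"
    unfolding half_coth power_divide by simp
  also have "((P + 1) * u) ^ 2 = ((P - 1) * u) ^ 2 + 4 * (P * u ^ 2)"
    by (simp add: power2_eq_square algebra_simps)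
  also have "P * u ^ 2 = P / (1 - P) ^ 2"
    by (simp add: u_def power2_commute divide_inverse power_inverse)
  finally show ?thesis
    unfolding u by (simp add: add_divide_distrib)
qed

definition residue_weight :: "nat \<Rightarrow> 'a::field_char_0 poly \<Rightarrow> 'a" where
  "residue_weight l Q = (\<Sum>i\<le>degree Q. coeff Q i * of_nat (l choose i) / 4 ^ (l - i))"

definition residue_coeff :: "'a::field_char_0 poly fps \<Rightarrow> nat \<Rightarrow> nat \<Rightarrow> 'a" where
  "residue_coeff U k n =
     (\<Sum>j=0..n. (of_nat (2 * k + 1) / 2 gchoose j) * residue_weight (k - j) ((U ^ j) $ n))"

text \<open>The derivation \<open>w d/dx\<close> fixes \<open>P\<close>, so it acts like \<open>d/dz\<close> on functions of \<open>P = e\<^sup>z\<close>,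
  and the coefficient at \<open>c\<close> annihilates its image, like a residue. Both sides of the
  theorem are instances: the residue in \<open>z\<close> with \<open>P = e\<^sup>z\<close>, and the constant term in
  \<open>p\<close> with \<open>P = p = x\<^sup>-\<^sup>1\<close> and \<open>w = -x\<close>.\<close>

locale log_derivation_residue =
  fixes P w :: "'a::field_char_0 fls" and c :: int
  assumes nonzero: "P \<noteq> 0"
    and log_deriv: "w * fls_deriv P = P"
    and residue_deriv: "\<And>f. fls_nth (w * fls_deriv f) c = 0"
begin

abbreviation s where "s \<equiv> half_coth P"
abbreviation t where "t \<equiv> four_sinh_sq P"

lemma not_constant: "P \<noteq> fls_const a"
  using log_deriv nonzero by auto

lemma ne_1: "P \<noteq> 1"
  using not_constant[of 1] by simp

lemma half_coth_nonzero: "s \<noteq> 0"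
proof -
  have "P \<noteq> - 1"
    using not_constant[of "-1"] by simp
  then have "P + 1 \<noteq> 0"
    by (simp add: eq_neg_iff_add_eq_0)
  moreover have "P - 1 \<noteq> 0"
    using ne_1 by simp
  ultimately show ?thesis by (simp add: half_coth_def)
qed

lemma deriv_half_coth_four_sinh_sq:
  shows "w * fls_deriv s = 1/4 - s ^ 2"
    and "w * fls_deriv t = 2 * t * s"
proof -
  define u where "u = inverse (P - 1)"
  define v where "v = inverse P"
  define h where "h = inverse (2 :: 'a fls)"
  have inv: "P * v = 1" "(P - 1) * u = 1" "2 * h = 1"
    using nonzero ne_1 by (auto simp: u_def v_def h_def)
  have s: "s = (P + 1) * u * h"
    by (simp add: half_coth_def u_def h_def field_simps)
  have t: "t = P + v - 2"
    by (simp add: four_sinh_sq_def v_def)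
  have "fls_deriv h = 0"
    using fls_inverse_deriv[of "2::'a fls"] by (simp add: h_def)
  then have "w * fls_deriv s = (w * fls_deriv P) * (u - (P + 1) * u ^ 2) * h"
    by (simp add: s u_def fls_inverse_deriv algebra_simps)
  also have "\<dots> = 1/4 - s ^ 2"
    unfolding log_deriv s using inv by algebra
  finally show "w * fls_deriv s = 1/4 - s ^ 2" .
  have "w * fls_deriv t = (w * fls_deriv P) * (1 - v ^ 2)"
    by (simp add: t v_def fls_inverse_deriv algebra_simps)
  also have "\<dots> = 2 * t * s"
    unfolding log_deriv s t using inv by algebra
  finally show "w * fls_deriv t = 2 * t * s" .
qed

lemma residue_half_coth_power_step: "fls_nth (s ^ (m + 2)) c = fls_nth (s ^ m) c / 4"
proof -
  have "w * fls_deriv (s ^ Suc m) = of_nat (Suc m) * (s ^ m * (1/4 - s ^ 2))"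
    using fls_deriv_power[of s "Suc m"]
    by (simp add: deriv_half_coth_four_sinh_sq(1) mult_ac del: of_nat_Suc power_Suc)
  then have "fls_nth (s ^ m * (1/4 - s ^ 2)) c = 0"
    using residue_deriv[of "s ^ Suc m"] by (simp add: fls_of_nat del: of_nat_Suc)
  then have "fls_nth (4 * (s ^ m * (1/4 - s ^ 2))) c = 0"
    by (simp only: fls_mult_of_numeral_nth mult_zero_right)
  moreover have "4 * (s ^ m * (1/4 - s ^ 2)) = s ^ m - 4 * s ^ (m + 2)"
    by (simp add: algebra_simps power_add power2_eq_square)
  ultimately show ?thesis
    by (simp only: fls_minus_nth fls_mult_of_numeral_nth) simp
qed

lemma residue_monomial_step:
  "2 * of_nat (Suc i) * fls_nth (t ^ Suc i * s ^ (m + 1)) c = of_nat m * fls_nth (t ^ i * s ^ (m - 1)) c"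
proof -
  have deriv_t: "fls_deriv (t ^ Suc i) = of_nat (Suc i) * t ^ i * fls_deriv t"
    using fls_deriv_power[of t "Suc i"] by simp
  have "w * fls_deriv (t ^ Suc i * s ^ m)
          = of_nat m * s ^ (m - 1) * t ^ i * (t * (w * fls_deriv s))
            + of_nat (Suc i) * t ^ i * s ^ m * (w * fls_deriv t)"
    unfolding fls_deriv_mult deriv_t fls_deriv_power[of s] by (simp only: power_Suc algebra_simps)
  also have "\<dots> = 2 * of_nat (Suc i) * (t ^ Suc i * s ^ (m + 1)) - of_nat m * (t ^ i * s ^ (m - 1))"
    unfolding deriv_half_coth_four_sinh_sq four_sinh_sq_half_coth[OF nonzero ne_1]
    by (simp add: algebra_simps)
  finally show ?thesis
    using residue_deriv[of "t ^ Suc i * s ^ m"]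
    by (simp add: fls_of_nat mult.assoc del: of_nat_Suc)
qed

lemma residue_monomial:
  "fls_nth (t ^ i * s ^ (2 * l + 1)) c = of_nat (l choose i) / 4 ^ (l - i) * fls_nth s c"
proof (induction l arbitrary: i)
  case 0
  show ?case
  proof (cases i)
    case (Suc j)
    then show ?thesis using residue_monomial_step[of j 0] by (simp del: of_nat_Suc)
  qed simp
next
  case (Suc l)
  show ?case
  proof (cases i)
    case 0
    have "s ^ (2 * Suc l + 1) = s ^ ((2 * l + 1) + 2)" by simp
    then have "fls_nth (s ^ (2 * Suc l + 1)) c = fls_nth (s ^ (2 * l + 1)) c / 4"
      by (simp only: residue_half_coth_power_step)
    moreover have "fls_nth (s ^ (2 * l + 1)) c = fls_nth s c / 4 ^ l"
      using Suc.IH[of 0] by simp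
    ultimately have "fls_nth (t ^ i * s ^ (2 * Suc l + 1)) c = fls_nth s c / 4 ^ l / 4"
      by (simp only: 0 power_0 mult_1_left)
    then show ?thesis
      using 0 by (simp add: mult.commute)
  next
    case (Suc j)
    let ?a = "fls_nth s c" and ?q = "(4::'a) ^ (l - j)"
    have "of_nat (2 * Suc j) * fls_nth (t ^ Suc j * s ^ (2 * Suc l + 1)) c
            = of_nat (2 * l + 2) * (of_nat (l choose j) / ?q * ?a)"
      using residue_monomial_step[of j "2 * l + 2"] Suc.IH[of j] by simp
    also have "\<dots> = 2 * of_nat (Suc l * (l choose j)) / ?q * ?a"
      by (simp add: algebra_simps)
    also have "\<dots> = of_nat (2 * Suc j) * (of_nat (Suc l choose Suc j) / ?q * ?a)"
      unfolding Suc_times_binomial_eq by (simp add: algebra_simps del: binomial_Suc_Suc)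
    finally have "fls_nth (t ^ Suc j * s ^ (2 * Suc l + 1)) c = of_nat (Suc l choose Suc j) / ?q * ?a"
      by (rule mult_left_cancel[THEN iffD1, rotated]) (simp only: of_nat_eq_0_iff, simp)
    then show ?thesis
      unfolding \<open>i = Suc j\<close> diff_Suc_Suc .
  qed
qed

lemma residue_poly_monomial:
  "fls_nth (fls_poly Q t * s ^ (2 * l + 1)) c = residue_weight l Q * fls_nth s c"
proof -
  have "fls_nth (fls_poly Q t * s ^ (2 * l + 1)) c
          = (\<Sum>i\<le>degree Q. coeff Q i * fls_nth (t ^ i * s ^ (2 * l + 1)) c)"
    unfolding fls_poly_altdef sum_distrib_right fls_nth_sum by (simp add: mult.assoc)
  then show ?thesis
    unfolding residue_monomial residue_weight_def sum_distrib_right by (simp add: mult_ac)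
qed

lemma residue_sqrt_series_odd_power:
  assumes "U $ 0 = 0" and "n \<le> k"
  shows "fls_nth ((sqrt_series s (fps_poly_eval U t) ^ (2 * k + 1)) $ n) c
           = residue_coeff U k n * fls_nth s c"
proof -
  have "(of_nat (2 * k + 1) / 2 :: 'a fls) = fls_const (of_nat (2 * k + 1) / 2)"
    by (simp add: fls_of_nat flip: fls_const_divide_const)
  then have "fls_nth ((sqrt_series s (fps_poly_eval U t) ^ (2 * k + 1)) $ n) c
      = fls_nth (\<Sum>j=0..n. fls_const (of_nat (2 * k + 1) / 2 gchoose j)
                     * (fls_poly ((U ^ j) $ n) t * s ^ (2 * (k - j) + 1))) c"
    using sqrt_series_odd_power_nth[OF half_coth_nonzero _ assms(2), of "fps_poly_eval U t"] assms(1)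
    by (simp add: fls_const_gchoose flip: fps_poly_eval_power)
  also have "\<dots> = residue_coeff U k n * fls_nth s c"
    unfolding fls_nth_sum fls_mult_const_nth residue_poly_monomial residue_coeff_def sum_distrib_right
    by (simp add: mult.assoc)
  finally show ?thesis .
qed

end

section \<open>Laurent series vanishing below a given order\<close>

definition vanishes_below :: "int \<Rightarrow> 'a::zero fls \<Rightarrow> bool" where
  "vanishes_below a f \<longleftrightarrow> (\<forall>i<a. fls_nth f i = 0)"

lemma vanishes_below_subdegree: "vanishes_below (fls_subdegree f) f"
  by (simp add: vanishes_below_def)

lemma fls_times_nth_from:
  fixes f g :: "'a::comm_ring_1 fls"
  assumes "vanishes_below a f" and "vanishes_below b g"
  shows "fls_nth (f * g) n = (\<Sum>i=a..n-b. fls_nth f i * fls_nth g (n - i))"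
proof (cases "f = 0 \<or> g = 0")
  case False
  then have "fls_nth f (fls_subdegree f) \<noteq> 0" and "fls_nth g (fls_subdegree g) \<noteq> 0"
    by auto
  then have "a \<le> fls_subdegree f" and "b \<le> fls_subdegree g"
    using assms by (meson not_le vanishes_below_def)+
  have "fls_nth (f * g) n
          = (\<Sum>i=fls_subdegree f..n - fls_subdegree g. fls_nth f i * fls_nth g (n - i))"
    by (rule fls_times_nth(2))
  also have "\<dots> = (\<Sum>i=a..n-b. fls_nth f i * fls_nth g (n - i))"
  proof (rule sum.mono_neutral_left)
    show "{fls_subdegree f..n - fls_subdegree g} \<subseteq> {a..n - b}"
      using \<open>a \<le> fls_subdegree f\<close> \<open>b \<le> fls_subdegree g\<close> by auto
    show "\<forall>i\<in>{a..n - b} - {fls_subdegree f..n - fls_subdegree g}. fls_nth f i * fls_nth g (n - i) = 0"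
      by (auto simp: not_le dest: fls_eq0_below_subdegree)
  qed simp
  finally show ?thesis .
qed auto

lemma vanishes_below_mono: "b \<le> a \<Longrightarrow> vanishes_below a f \<Longrightarrow> vanishes_below b f"
  by (auto simp: vanishes_below_def)

lemma vanishes_below_mult:
  fixes f g :: "'a::comm_ring_1 fls"
  assumes "vanishes_below a f" and "vanishes_below b g"
  shows "vanishes_below (a + b) (f * g)"
  unfolding vanishes_below_def
proof (intro allI impI)
  fix i assume "i < a + b"
  have "fls_nth (f * g) i = (\<Sum>j=a..i-b. fls_nth f j * fls_nth g (i - j))"
    using assms by (rule fls_times_nth_from)
  also have "\<dots> = 0"
    using \<open>i < a + b\<close> by simp
  finally show "fls_nth (f * g) i = 0" .
qed

lemma vanishes_below_sum: "(\<And>x. x \<in> A \<Longrightarrow> vanishes_below a (f x)) \<Longrightarrow> vanishes_below a (\<Sum>x\<in>A. f x)"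
  by (induction A rule: infinite_finite_induct) (auto simp: vanishes_below_def)

lemma vanishes_below_const [simp]: "vanishes_below 0 (fls_const c)"
  by (simp add: vanishes_below_def)

lemma vanishes_below_fps_to_fls [simp]: "vanishes_below 0 (fps_to_fls f)"
  by (simp add: vanishes_below_def)

lemma vanishes_below_power:
  fixes f :: "'a::comm_ring_1 fls"
  assumes "vanishes_below 0 f"
  shows "vanishes_below 0 (f ^ n)"
proof (induction n)
  case (Suc n)
  then show ?case
    using vanishes_below_mult[OF assms Suc.IH] by simp
qed (simp add: vanishes_below_def)

lemma vanishes_below_fls_poly: "vanishes_below 0 t \<Longrightarrow> vanishes_below 0 (fls_poly Q t)"
  unfolding fls_poly_altdef
  by (intro vanishes_below_sum) (metis add_0 vanishes_below_const vanishes_below_mult vanishes_below_power)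

lemma vanishes_below_power_nth:
  fixes Y :: "'a::comm_ring_1 fls fps"
  assumes "\<And>d. vanishes_below a (Y $ d)" and "a \<ge> 0"
  shows "vanishes_below a ((Y ^ Suc i) $ n)"
proof (induction i arbitrary: n)
  case (Suc i)
  have "vanishes_below a (Y $ j * (Y ^ Suc i) $ (n - j))" for j
    by (rule vanishes_below_mono[of a "a + a"])
      (use assms(2) vanishes_below_mult[OF assms(1) Suc.IH] in auto)
  moreover have "(Y ^ Suc (Suc i)) $ n = (\<Sum>j=0..n. Y $ j * (Y ^ Suc i) $ (n - j))"
    by (simp only: power_Suc fps_mult_nth)
  ultimately show ?case
    by (simp only: vanishes_below_sum)
qed (simp add: assms)

lemma vanishes_below_compose_nth:
  fixes F Y :: "'a::comm_ring_1 fls fps"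
  assumes "\<And>i. vanishes_below 0 (F $ i)" and "\<And>d. vanishes_below a (Y $ d)" and "a \<ge> 0"
    and "n > 0"
  shows "vanishes_below a ((F oo Y) $ n)"
  unfolding fps_compose_nth
proof (intro vanishes_below_sum)
  fix i
  show "vanishes_below a (F $ i * (Y ^ i) $ n)"
  proof (cases i)
    case (Suc j)
    then show ?thesis
      using vanishes_below_mult[OF assms(1) vanishes_below_power_nth[OF assms(2,3)]] by simp
  qed (use assms(4) in \<open>simp add: vanishes_below_def\<close>)
qed

section \<open>Transposing double series\<close>

definition fls_fps_transpose :: "'a::comm_ring_1 fps fls \<Rightarrow> 'a fls fps" where
  "fls_fps_transpose f = Abs_fps (\<lambda>n. fls_shift (- fls_subdegree f)
     (fps_to_fls (Abs_fps (\<lambda>i. fls_nth f (int i + fls_subdegree f) $ n))))"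

lemma fls_fps_transpose_nth [simp]: "fls_nth (fls_fps_transpose f $ n) m = fls_nth f m $ n"
  by (cases "m < fls_subdegree f") (simp_all add: fls_fps_transpose_def)

lemma fls_fps_transpose_inject: "fls_fps_transpose f = fls_fps_transpose g \<Longrightarrow> f = g"
  by (metis fls_eqI fps_ext fls_fps_transpose_nth)

lemma fls_fps_transpose_one: "fls_fps_transpose 1 = 1"
  by (rule fps_ext, rule fls_eqI) simp

lemma fls_fps_transpose_mult: "fls_fps_transpose (f * g) = fls_fps_transpose f * fls_fps_transpose g"
proof (rule fps_ext, rule fls_eqI)
  fix n m
  define a where "a = fls_subdegree f"
  define b where "b = fls_subdegree g"
  have f: "vanishes_below a f" and g: "vanishes_below b g"
    by (simp_all add: a_def b_def vanishes_below_subdegree)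
  have "fls_nth (fls_fps_transpose (f * g) $ n) m
          = (\<Sum>i=a..m-b. \<Sum>j=0..n. fls_nth f i $ j * fls_nth g (m - i) $ (n - j))"
    by (simp add: fls_times_nth_from[OF f g] fps_sum_nth fps_mult_nth)
  also have "\<dots> = (\<Sum>j=0..n. \<Sum>i=a..m-b. fls_nth f i $ j * fls_nth g (m - i) $ (n - j))"
    by (rule sum.swap)
  also have "\<dots> = (\<Sum>j=0..n. fls_nth (fls_fps_transpose f $ j * fls_fps_transpose g $ (n - j)) m)"
    using f g by (simp add: fls_times_nth_from[where a = a and b = b] vanishes_below_def)
  also have "\<dots> = fls_nth ((fls_fps_transpose f * fls_fps_transpose g) $ n) m"
    by (simp add: fps_mult_nth fls_nth_sum)
  finally show "fls_nth (fls_fps_transpose (f * g) $ n) m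
                  = fls_nth ((fls_fps_transpose f * fls_fps_transpose g) $ n) m" .
qed

lemma fls_fps_transpose_power: "fls_fps_transpose (f ^ n) = fls_fps_transpose f ^ n"
  by (induction n) (simp_all add: fls_fps_transpose_one fls_fps_transpose_mult)

definition fps_fls_transpose :: "int \<Rightarrow> 'a::comm_ring_1 fls fps \<Rightarrow> 'a fps fls" where
  "fps_fls_transpose b F =
     fls_shift (- b) (fps_to_fls (Abs_fps (\<lambda>i. Abs_fps (\<lambda>n. fls_nth (F $ n) (int i + b)))))"

lemma fps_fls_transpose_nth:
  "fls_nth (fps_fls_transpose b F) m $ n = (if m < b then 0 else fls_nth (F $ n) m)"
  by (simp add: fps_fls_transpose_def)

lemma fls_fps_transpose_inverse:
  assumes "\<And>n m. m < b \<Longrightarrow> fls_nth (F $ n) m = 0"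
  shows "fls_fps_transpose (fps_fls_transpose b F) = F"
  by (rule fps_ext, rule fls_eqI) (simp add: fps_fls_transpose_nth assms)

section \<open>Bernoulli numbers\<close>

lemma bernoulli_num_0 [simp]: "bernoulli_num 0 = 1"
  by (simp add: bernoulli_num.simps)

lemma bernoulli_num_1 [simp]: "bernoulli_num (Suc 0) = -1/2"
  by (subst bernoulli_num.simps) simp

lemma bernoulli_num_2 [simp]: "bernoulli_num 2 = 1/6"
  by (subst bernoulli_num.simps) (simp add: numeral_2_eq_2 lessThan_Suc)

lemma bernoulli_num_binomial_sum:
  assumes "n \<ge> 2"
  shows "(\<Sum>j<n. of_nat (n choose j) * bernoulli_num j) = 0"
proof -
  define m where "m = n - 1"
  have m: "n = Suc m" "m \<ge> 1"
    using assms by (simp_all add: m_def)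
  have "bernoulli_num m = - (\<Sum>j<m. of_nat (n choose j) * bernoulli_num j) / of_nat n"
    using m by (subst bernoulli_num.simps) simp
  then have "of_nat (n choose m) * bernoulli_num m = - (\<Sum>j<m. of_nat (n choose j) * bernoulli_num j)"
    using m by (simp add: field_simps del: of_nat_Suc)
  then show ?thesis
    using m by simp
qed

definition bernoulli_fps :: "rat fps" where
  "bernoulli_fps = Abs_fps (\<lambda>n. bernoulli_num n / fact n)"

lemma bernoulli_fps_times_exp: "bernoulli_fps * (fps_exp 1 - 1) = fps_X"
proof (rule fps_ext)
  fix n
  have "(bernoulli_fps * (fps_exp 1 - 1)) $ n
          = (\<Sum>i<n. bernoulli_num i / fact i * (1 / fact (n - i)))"
    unfolding fps_mult_nth
    by (rule sum.mono_neutral_cong_right) (auto simp: bernoulli_fps_def)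
  also have "\<dots> = (\<Sum>i<n. of_nat (n choose i) * bernoulli_num i) / fact n"
    unfolding sum_divide_distrib by (intro sum.cong refl) (simp add: binomial_fact field_simps)
  also have "\<dots> = fps_X $ n"
    using bernoulli_num_binomial_sum[of n] by (cases "n \<le> 1") (auto simp: le_Suc_eq)
  finally show "(bernoulli_fps * (fps_exp 1 - 1)) $ n = fps_X $ n" .
qed

lemma bernoulli_fps_reflect: "bernoulli_fps oo (- fps_X) = bernoulli_fps + fps_X"
proof -
  define E where "E = fps_exp (1::rat)"
  have E_inv: "fps_exp (-1) * E = 1"
    using fps_exp_add_mult[of "-1::rat" 1] by (simp add: E_def)
  define B' where "B' = bernoulli_fps oo (- fps_X)"
  have "(bernoulli_fps * (E - 1)) oo (- fps_X) = - fps_X"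
    by (simp add: E_def bernoulli_fps_times_exp)
  then have "B' * (fps_exp (-1) - 1) * E = - fps_X * E"
    by (simp add: fps_compose_mult_distrib fps_compose_sub_distrib E_def B'_def)
  then have "B' * (E - 1) = fps_X * E"
    using E_inv by (simp add: algebra_simps)
  also have "\<dots> = (bernoulli_fps + fps_X) * (E - 1)"
    using bernoulli_fps_times_exp by (simp add: E_def algebra_simps)
  finally have "B' * (E - 1) = (bernoulli_fps + fps_X) * (E - 1)" .
  moreover have "(E - 1) $ 1 \<noteq> 0"
    by (simp add: E_def)
  then have "E - 1 \<noteq> 0"
    by auto
  ultimately show ?thesis
    by (simp add: B'_def)
qed

lemma bernoulli_num_odd:
  assumes "odd n" and "n \<ge> 3"
  shows "bernoulli_num n = 0"
proof -
  have "(bernoulli_fps oo (- fps_X)) $ n = (bernoulli_fps + fps_X) $ n"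
    by (simp only: bernoulli_fps_reflect)
  then show ?thesis
    using assms by (simp add: fps_compose_uminus' bernoulli_fps_def)
qed

section \<open>The common shape of both sides\<close>

fun shifted_dickson :: "nat \<Rightarrow> 'a::comm_ring_1 poly" where
  "shifted_dickson 0 = [:2:]"
| "shifted_dickson (Suc 0) = [:2, 1:]"
| "shifted_dickson (Suc (Suc k)) = [:2, 1:] * shifted_dickson (Suc k) - shifted_dickson k"

lemma fls_poly_shifted_dickson:
  fixes P :: "'a::field fls"
  assumes "P \<noteq> 0"
  shows "fls_poly (shifted_dickson k) (four_sinh_sq P) = P ^ k + inverse P ^ k"
proof (induction k rule: shifted_dickson.induct)
  case 2
  show ?case by (simp add: four_sinh_sq_def)
next
  case (3 k)
  have "fls_poly [:2, 1:] (four_sinh_sq P) = P + inverse P"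
    by (simp add: four_sinh_sq_def)
  then have "fls_poly (shifted_dickson (Suc (Suc k))) (four_sinh_sq P)
               = (P + inverse P) * (P ^ Suc k + inverse P ^ Suc k) - (P ^ k + inverse P ^ k)"
    by (simp only: shifted_dickson.simps fls_poly_diff fls_poly_mult 3)
  also have "\<dots> = P ^ Suc (Suc k) + inverse P ^ Suc (Suc k) + (P * inverse P - 1) * (P ^ k + inverse P ^ k)"
    by (simp add: algebra_simps)
  also have "\<dots> = P ^ Suc (Suc k) + inverse P ^ Suc (Suc k)"
    using assms by simp
  finally show ?case .
qed simp

text \<open>The \<open>q\<^sup>d\<close>-coefficient, \<open>d > 0\<close>, of \<open>\<wp> - 4 G\<^sub>2\<close> is \<open>\<Sum>\<^sub>k\<^sub>|\<^sub>d k (P\<^sup>k + P\<^sup>-\<^sup>k - 6)\<close> both for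
  \<open>P = p\<close> and for \<open>P = e\<^sup>z\<close>; this series records it as a polynomial in \<open>four_sinh_sq P\<close>.\<close>

definition wp_tail :: "'a::comm_ring_1 poly fps" where
  "wp_tail = Abs_fps (\<lambda>d. if d = 0 then 0
                          else (\<Sum>k | k dvd d. smult (of_nat k) (shifted_dickson k - [:6:])))"

lemma wp_tail_nth_0 [simp]: "wp_tail $ 0 = 0"
  by (simp add: wp_tail_def)

lemma fls_poly_wp_tail:
  fixes P :: "'a::field fls"
  assumes "P \<noteq> 0" and "n > 0"
  shows "fls_poly (wp_tail $ n) (four_sinh_sq P)
           = (\<Sum>k | k dvd n. fls_const (of_nat k) * (P ^ k + inverse P ^ k - 6))"
  using assms
  by (simp add: wp_tail_def fls_poly_sum fls_poly_smult fls_poly_shifted_dickson)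

lemma G_nth:
  "G k $ n = (if even k \<and> k \<ge> 2 then (if n = 0 then - bernoulli_num k / (2 * of_nat k)
                                        else (\<Sum>d | d dvd n. of_nat d ^ (k - 1)))
              else 0)"
  by (simp add: G_def)

lemma G2_nth: "G 2 $ n = (if n = 0 then -1/24 else (\<Sum>d | d dvd n. of_nat d))"
  by (simp add: G_nth)

section \<open>The constant term in \<open>p\<close>\<close>

interpretation p_side: log_derivation_residue pvar "- fls_X" 0
proof
  show "pvar \<noteq> 0"
    by (simp add: pvar_def)
  have "fls_X * fls_X_inv = (1 :: rat fls)"
    by (simp add: fls_X_times_conv_shift)
  then show "- fls_X * fls_deriv pvar = pvar"
    by (simp add: pvar_def power2_eq_square mult.assoc)
  show "fls_nth (- fls_X * fls_deriv f) 0 = 0" for f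
    by (simp add: fls_X_times_conv_shift)
qed

lemma half_coth_pvar_nth_0: "fls_nth (half_coth pvar) 0 = 1/2"
proof -
  have "fls_subdegree (pvar - 1) = -1"
    by (rule fls_subdegree_eqI) (simp_all add: pvar_def)
  then have "fls_nth (inverse (pvar - 1)) 0 = 0"
    by (simp add: fls_eq0_below_subdegree)
  then show ?thesis
    by (simp add: half_coth_conv_inverse[OF p_side.ne_1] fls_one_divide_numeral)
qed

lemma wp_pq_decomposition:
  "wp_pq - 4 * G2_pq = fps_const (half_coth pvar ^ 2) + fps_poly_eval wp_tail (four_sinh_sq pvar)"
proof (rule fps_ext)
  fix n
  show "(wp_pq - 4 * G2_pq) $ n = (fps_const (half_coth pvar ^ 2) + fps_poly_eval wp_tail (four_sinh_sq pvar)) $ n"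
  proof (cases "n = 0")
    case True
    have "4 * G2_pq $ 0 = - (1/6 :: rat fls)"
      by (simp add: G2_pq_def G2_nth fls_one_divide_numeral fls_numeral_mult_const)
    then have "(wp_pq - 4 * G2_pq) $ 0 = 1/12 + pvar / (1 - pvar) ^ 2 + 1/6"
      by (simp add: wp_pq_def numeral_fps_const)
    also have "\<dots> = half_coth pvar ^ 2"
      by (simp add: half_coth_square[OF p_side.ne_1])
    finally show ?thesis
      using True by simp
  next
    case False
    have "(wp_pq - 4 * G2_pq) $ n
            = (\<Sum>k | k dvd n. of_nat k * (pvar ^ k - 2 + inverse (pvar ^ k)))
              - 4 * fls_const (\<Sum>d | d dvd n. of_nat d)"
      using False by (simp add: wp_pq_def G2_pq_def G2_nth numeral_fps_const)
    also have "\<dots> = (\<Sum>k | k dvd n. fls_const (of_nat k) * (pvar ^ k + inverse pvar ^ k - 6))"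
      unfolding fls_const_sum sum_distrib_left sum_subtractf[symmetric]
      by (intro sum.cong refl) (simp add: fls_of_nat power_inverse algebra_simps)
    finally show ?thesis
      using False by (simp add: fls_poly_wp_tail p_side.nonzero)
  qed
qed

lemma sqrt_wp_pq_eq:
  "sqrt_wp_pq = sqrt_series (half_coth pvar) (fps_poly_eval wp_tail (four_sinh_sq pvar))"
  (is "_ = ?S")
proof -
  have square: "?S ^ 2 = wp_pq - 4 * G2_pq"
    unfolding wp_pq_decomposition
    by (rule sqrt_series_square[OF p_side.half_coth_nonzero]) simp
  show ?thesis
    unfolding sqrt_wp_pq_def half_coth_def[symmetric]
  proof (rule the_equality)
    show "?S ^ 2 = wp_pq - 4 * G2_pq \<and> ?S $ 0 = half_coth pvar"
      using square by (intro conjI sqrt_series_nth_0)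
    fix s assume s: "s ^ 2 = wp_pq - 4 * G2_pq \<and> s $ 0 = half_coth pvar"
    show "s = ?S"
    proof (rule fps_square_eq_imp_eq)
      show "s ^ 2 = ?S ^ 2" and "s $ 0 = ?S $ 0"
        using s square by (simp_all only: sqrt_series_nth_0)
      show "?S $ 0 \<noteq> 0"
        unfolding sqrt_series_nth_0 by (rule p_side.half_coth_nonzero)
    qed
  qed
qed

lemma RHS_nth:
  assumes "n \<le> k"
  shows "RHS k $ n = residue_coeff wp_tail k n"
proof -
  have "RHS k $ n = 2 * fls_nth ((sqrt_wp_pq ^ (2 * k + 1)) $ n) 0"
    by (simp add: RHS_def const_term_p_def numeral_fps_const)
  also have "\<dots> = 2 * (residue_coeff wp_tail k n * (1/2))"
    by (simp only: sqrt_wp_pq_eq p_side.residue_sqrt_series_odd_power[OF wp_tail_nth_0 assms]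
        half_coth_pvar_nth_0)
  finally show ?thesis
    by simp
qed

section \<open>The residue in \<open>z\<close>\<close>

definition exp_z :: "rat fls" where
  "exp_z = fps_to_fls (fps_exp 1)"

interpretation z_side: log_derivation_residue exp_z 1 "-1"
proof
  have "fls_nth exp_z 0 = 1"
    by (simp add: exp_z_def)
  then show "exp_z \<noteq> 0"
    by auto
  show "1 * fls_deriv exp_z = exp_z"
    by (simp add: exp_z_def fls_deriv_fps_to_fls)
  show "fls_nth (1 * fls_deriv f) (-1) = 0" for f
    by simp
qed

lemma exp_z_power: "exp_z ^ k = fps_to_fls (fps_exp (of_nat k))"
  by (simp add: exp_z_def fps_exp_power_mult flip: fps_to_fls_power)

lemma inverse_exp_z_power: "inverse exp_z ^ k = fps_to_fls (fps_exp (- of_nat k))"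
proof -
  have "exp_z * fps_to_fls (fps_exp (-1)) = 1"
    using fps_exp_add_mult[of "1::rat" "-1"] by (simp add: exp_z_def flip: fls_times_fps_to_fls)
  then have "inverse exp_z = fps_to_fls (fps_exp (-1))"
    by (metis inverse_unique)
  then show ?thesis
    by (simp add: fps_exp_power_mult flip: fps_to_fls_power)
qed

lemma inverse_exp_z_minus_1: "inverse (exp_z - 1) = fls_X_inv * fps_to_fls bernoulli_fps"
proof -
  have "fps_to_fls (bernoulli_fps * (fps_exp 1 - 1)) = fls_X"
    by (simp add: bernoulli_fps_times_exp)
  then have "(exp_z - 1) * fps_to_fls bernoulli_fps = fls_X"
    by (simp add: exp_z_def fls_times_fps_to_fls mult.commute)
  then have "(exp_z - 1) * (fls_X_inv * fps_to_fls bernoulli_fps) = fls_X_inv * fls_X"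
    by (metis mult.left_commute)
  also have "\<dots> = 1"
    by (simp add: fls_X_inv_times_conv_shift)
  finally show ?thesis
    by (metis inverse_unique)
qed

lemma inverse_exp_z_minus_1_nth:
  "fls_nth (inverse (exp_z - 1)) m
     = (if m < -1 then 0 else bernoulli_num (nat (m + 1)) / fact (nat (m + 1)))"
  by (simp add: inverse_exp_z_minus_1 fls_X_inv_times_conv_shift bernoulli_fps_def)

lemma half_coth_exp_z_nth:
  "fls_nth (half_coth exp_z) m = (if m = 0 then 1/2 else 0) + fls_nth (inverse (exp_z - 1)) m"
  by (simp add: half_coth_conv_inverse[OF z_side.ne_1] fls_one_divide_numeral)

lemma half_coth_exp_z_square_nth:
  "fls_nth (half_coth exp_z ^ 2) m
     = (if m = 0 then 1/4 else 0) - of_int (m + 1) * fls_nth (inverse (exp_z - 1)) (m + 1)"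
proof -
  have "fls_deriv (inverse (exp_z - 1)) = - (exp_z / (1 - exp_z) ^ 2)"
    by (simp add: fls_inverse_deriv' exp_z_def fls_deriv_fps_to_fls power2_commute)
  then have "exp_z / (1 - exp_z) ^ 2 = - fls_deriv (inverse (exp_z - 1))"
    by simp
  then show ?thesis
    by (simp add: half_coth_square[OF z_side.ne_1] fls_one_divide_numeral)
qed

lemma G_nth_0_bernoulli:
  assumes "j \<ge> 1"
  shows "2 / fact j * G (j + 2) $ 0 = - of_nat (j + 1) * (bernoulli_num (j + 2) / fact (j + 2))"
proof (cases "even j")
  case True
  have cancel: "2 / F * (- B / (2 * b)) = - a * (B / (b * a * F))"
    if "a \<noteq> 0" "b \<noteq> 0" "F \<noteq> 0" for a b F B :: rat
    using that by (simp add: field_simps)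
  have "G (j + 2) $ 0 = - bernoulli_num (j + 2) / (2 * of_nat (j + 2))"
    using True by (simp add: G_nth)
  moreover have "(fact (j + 2) :: rat) = of_nat (j + 2) * of_nat (j + 1) * fact j"
    by (simp add: fact_Suc algebra_simps)
  ultimately show ?thesis
    by (simp only:) (rule cancel, simp_all)
next
  case False
  then show ?thesis
    using assms bernoulli_num_odd[of "j + 2"] by (simp add: G_nth)
qed

lemma G_nth_divisor_sum:
  assumes "j \<ge> 1" and "n > 0"
  shows "2 / fact j * G (j + 2) $ n
           = (\<Sum>k | k dvd n. of_nat k * (of_nat k ^ j / fact j + (- of_nat k) ^ j / fact j))"
proof (cases "even j")
  case True
  then show ?thesis
    using assms by (simp add: G_nth sum_distrib_left field_simps)
qed (simp add: G_nth)

lemma wp_z_shifted_nth: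
  "fls_nth (wp_z - 4 * fls_const (G 2)) m $ n
     = (if m = -2 \<and> n = 0 then 1 else 0)
       + (if m \<ge> 2 then 2 / fact (nat m) * G (nat m + 2) $ n else 0)
       - (if m = 0 then 4 * G 2 $ n else 0)"
  by (auto simp: wp_z_def nat_le_iff numeral_fps_const)

lemma wp_z_transposed_nth_0:
  "fls_fps_transpose (wp_z - 4 * fls_const (G 2)) $ 0 = half_coth exp_z ^ 2"
proof (rule fls_eqI)
  fix m :: int
  have lhs: "fls_nth (fls_fps_transpose (wp_z - 4 * fls_const (G 2)) $ 0) m
      = (if m = -2 then 1 else 0) + (if m \<ge> 2 then 2 / fact (nat m) * G (nat m + 2) $ 0 else 0)
        + (if m = 0 then 1/6 else 0)"
    unfolding fls_fps_transpose_nth wp_z_shifted_nth by (simp add: G2_nth)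
  have rhs: "fls_nth (half_coth exp_z ^ 2) m
      = (if m = 0 then 1/4 else 0) - of_int (m + 1)
          * (if m < -2 then 0 else bernoulli_num (nat (m + 2)) / fact (nat (m + 2)))"
    by (simp add: half_coth_exp_z_square_nth inverse_exp_z_minus_1_nth add.assoc)
  have coeff_ge_2: "2 / fact (nat m) * G (nat m + 2) $ 0
              = - (of_int (m + 1) * (bernoulli_num (nat (m + 2)) / fact (nat (m + 2))))"
    if "m \<ge> 2"
  proof -
    have "nat (m + 2) = nat m + 2" "of_int (m + 1) = (of_nat (nat m + 1) :: rat)"
      using that by auto
    then show ?thesis
      using G_nth_0_bernoulli[of "nat m"] that by (simp only:)
  qed
  consider "m < -2" | "m = -2" | "m = -1" | "m = 0" | "m = 1" | "m \<ge> 2"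
    by linarith
  then show "fls_nth (fls_fps_transpose (wp_z - 4 * fls_const (G 2)) $ 0) m
               = fls_nth (half_coth exp_z ^ 2) m"
    unfolding lhs rhs
    by cases (use coeff_ge_2 bernoulli_num_odd[of 3] in \<open>simp_all add: numeral_3_eq_3\<close>)
qed

lemma fls_poly_wp_tail_exp_z_nth:
  assumes "n > 0"
  shows "fls_nth (fls_poly (wp_tail $ n) (four_sinh_sq exp_z)) m
      = (\<Sum>k | k dvd n. of_nat k * ((if m < 0 then 0 else
           of_nat k ^ nat m / fact (nat m) + (- of_nat k) ^ nat m / fact (nat m))
           - (if m = 0 then 6 else 0)))"
  unfolding fls_poly_wp_tail[OF z_side.nonzero assms] fls_nth_sum
proof (intro sum.cong refl)
  fix k
  show "fls_nth (fls_const (of_nat k) * (exp_z ^ k + inverse exp_z ^ k - 6)) m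
      = of_nat k * ((if m < 0 then 0 else
         of_nat k ^ nat m / fact (nat m) + (- of_nat k) ^ nat m / fact (nat m))
         - (if m = 0 then 6 else 0))"
    unfolding exp_z_power inverse_exp_z_power fls_mult_const_nth fls_minus_nth fls_plus_nth
      fps_to_fls_nth fps_exp_nth
    by simp
qed

lemma wp_z_transposed_nth:
  assumes "n > 0"
  shows "fls_fps_transpose (wp_z - 4 * fls_const (G 2)) $ n
           = fls_poly (wp_tail $ n) (four_sinh_sq exp_z)"
proof (rule fls_eqI)
  fix m :: int
  have lhs: "fls_nth (fls_fps_transpose (wp_z - 4 * fls_const (G 2)) $ n) m
      = (if m \<ge> 2 then 2 / fact (nat m) * G (nat m + 2) $ n else 0)
        - (if m = 0 then 4 * (\<Sum>d | d dvd n. of_nat d) else 0)"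
    unfolding fls_fps_transpose_nth wp_z_shifted_nth using assms by (simp add: G2_nth)
  have coeff_ge_2: "2 / fact (nat m) * G (nat m + 2) $ n
     = (\<Sum>k | k dvd n. of_nat k * (of_nat k ^ nat m / fact (nat m) + (- of_nat k) ^ nat m / fact (nat m)))"
    if "m \<ge> 2"
    using that assms by (intro G_nth_divisor_sum) auto
  consider "m < 0" | "m = 0" | "m = 1" | "m \<ge> 2"
    by linarith
  then show "fls_nth (fls_fps_transpose (wp_z - 4 * fls_const (G 2)) $ n) m
               = fls_nth (fls_poly (wp_tail $ n) (four_sinh_sq exp_z)) m"
    unfolding lhs fls_poly_wp_tail_exp_z_nth[OF assms]
    by cases (use coeff_ge_2 in \<open>simp_all add: sum_distrib_left sum_negf algebra_simps\<close>)
qed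

lemma wp_z_transposed:
  "fls_fps_transpose (wp_z - 4 * fls_const (G 2))
     = fps_const (half_coth exp_z ^ 2) + fps_poly_eval wp_tail (four_sinh_sq exp_z)"
  by (rule fps_ext) (simp add: wp_z_transposed_nth_0 wp_z_transposed_nth)

lemma half_coth_exp_z_vanishes_below: "vanishes_below (-1) (half_coth exp_z)"
  by (simp add: vanishes_below_def half_coth_exp_z_nth inverse_exp_z_minus_1_nth)

lemma half_coth_exp_z_nth_minus_1 [simp]: "fls_nth (half_coth exp_z) (-1) = 1"
  and half_coth_exp_z_nth_0 [simp]: "fls_nth (half_coth exp_z) 0 = 0"
  by (simp_all add: half_coth_exp_z_nth inverse_exp_z_minus_1_nth)

lemma inverse_half_coth_exp_z_square_vanishes_below: "vanishes_below 2 (inverse (half_coth exp_z ^ 2))"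
proof -
  have "fls_subdegree (half_coth exp_z) = -1"
    using half_coth_exp_z_vanishes_below by (intro fls_subdegree_eqI) (auto simp: vanishes_below_def)
  then show ?thesis
    by (simp add: vanishes_below_def fls_subdegree_pow)
qed

lemma four_sinh_sq_exp_z_vanishes_below: "vanishes_below 0 (four_sinh_sq exp_z)"
proof -
  have "four_sinh_sq exp_z = fps_to_fls (fps_exp 1 + fps_exp (-1) - 2)"
    using inverse_exp_z_power[of 1] by (simp add: four_sinh_sq_def exp_z_def)
  then show ?thesis
    by (simp only: vanishes_below_fps_to_fls)
qed

definition wp_z_sqrt_transposed :: "rat fls fps" where
  "wp_z_sqrt_transposed = sqrt_series (half_coth exp_z) (fps_poly_eval wp_tail (four_sinh_sq exp_z))"

lemma wp_z_sqrt_transposed_square: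
  "wp_z_sqrt_transposed ^ 2 = fls_fps_transpose (wp_z - 4 * fls_const (G 2))"
  unfolding wp_z_transposed wp_z_sqrt_transposed_def
  by (rule sqrt_series_square[OF z_side.half_coth_nonzero]) simp

lemma wp_z_sqrt_transposed_nth_nonpos:
  assumes "m \<le> 0"
  shows "fls_nth (wp_z_sqrt_transposed $ n) m = (if n = 0 then fls_nth (half_coth exp_z) m else 0)"
proof (cases "n = 0")
  case False
  let ?Y = "fps_const (inverse (half_coth exp_z ^ 2)) * fps_poly_eval wp_tail (four_sinh_sq exp_z)"
  have "vanishes_below 2 (?Y $ d)" for d
    using vanishes_below_mult[OF inverse_half_coth_exp_z_square_vanishes_below
        vanishes_below_fls_poly[OF four_sinh_sq_exp_z_vanishes_below]]
    by simp
  then have "vanishes_below 2 ((fps_binomial (1/2) oo ?Y) $ n)"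
    using False by (intro vanishes_below_compose_nth) (simp_all add: fls_one_divide_numeral fls_const_gchoose)
  then have "vanishes_below (-1 + 2) (half_coth exp_z * (fps_binomial (1/2) oo ?Y) $ n)"
    by (rule vanishes_below_mult[OF half_coth_exp_z_vanishes_below])
  then show ?thesis
    using False assms by (simp add: wp_z_sqrt_transposed_def sqrt_series_def vanishes_below_def)
qed (simp add: wp_z_sqrt_transposed_def)

text \<open>The \<open>z\<^sup>-\<^sup>1\<close>-coefficient alone selects one of the two square roots.\<close>

lemma wp_z_sqrt_unique:
  assumes square: "s ^ 2 = wp_z - 4 * fls_const (G 2)" and residue: "fls_nth s (-1) = 1"
  shows "fls_fps_transpose s = wp_z_sqrt_transposed"
proof (rule fps_square_eq_imp_eq)
  show s_square: "fls_fps_transpose s ^ 2 = wp_z_sqrt_transposed ^ 2"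
    by (simp only: square wp_z_sqrt_transposed_square flip: fls_fps_transpose_power)
  let ?a = "fls_fps_transpose s $ 0"
  have "?a ^ 2 = half_coth exp_z ^ 2"
    using arg_cong[OF s_square, of "\<lambda>f. f $ 0"] by (simp add: fps_nth_power_0 wp_z_sqrt_transposed_def)
  then have "(?a - half_coth exp_z) * (?a + half_coth exp_z) = 0"
    by (simp add: algebra_simps power2_eq_square)
  moreover have "fls_nth (?a + half_coth exp_z) (-1) = 2"
    using residue by simp
  then have "?a + half_coth exp_z \<noteq> 0"
    by (metis fls_zero_nth zero_neq_numeral)
  ultimately show "?a = wp_z_sqrt_transposed $ 0"
    by (simp add: wp_z_sqrt_transposed_def)
  show "wp_z_sqrt_transposed $ 0 \<noteq> 0"
    by (simp add: wp_z_sqrt_transposed_def z_side.half_coth_nonzero)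
qed

lemma fls_fps_transpose_sqrt_wp_z: "fls_fps_transpose sqrt_wp_z = wp_z_sqrt_transposed"
proof -
  let ?s = "fps_fls_transpose (-1) wp_z_sqrt_transposed"
  have transpose: "fls_fps_transpose ?s = wp_z_sqrt_transposed"
    using half_coth_exp_z_vanishes_below
    by (intro fls_fps_transpose_inverse) (simp add: wp_z_sqrt_transposed_nth_nonpos vanishes_below_def)
  have "?s ^ 2 = wp_z - 4 * fls_const (G 2) \<and> (\<forall>n < -1. fls_nth ?s n = 0)
          \<and> fls_nth ?s (-1) = 1 \<and> fls_nth ?s 0 = 0"
  proof (intro conjI allI impI)
    show "?s ^ 2 = wp_z - 4 * fls_const (G 2)"
      by (rule fls_fps_transpose_inject)
        (simp only: fls_fps_transpose_power transpose wp_z_sqrt_transposed_square)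
  qed (intro fps_ext; simp add: fps_fls_transpose_nth wp_z_sqrt_transposed_nth_nonpos)+
  then have "sqrt_wp_z = ?s"
    unfolding sqrt_wp_z_def
  proof (rule the_equality)
    fix s assume "s ^ 2 = wp_z - 4 * fls_const (G 2) \<and> (\<forall>n < -1. fls_nth s n = 0)
                    \<and> fls_nth s (-1) = 1 \<and> fls_nth s 0 = 0"
    then have "fls_fps_transpose s = fls_fps_transpose ?s"
      by (simp add: transpose wp_z_sqrt_unique)
    then show "s = ?s"
      by (rule fls_fps_transpose_inject)
  qed
  then show ?thesis
    using transpose by simp
qed

lemma LHS_nth:
  assumes "n \<le> k"
  shows "LHS k $ n = residue_coeff wp_tail k n"
proof -
  have "fls_fps_transpose (wp_z_half_pow k) = (wp_z_sqrt_transposed ^ 2) ^ k * wp_z_sqrt_transposed"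
    by (simp add: wp_z_half_pow_def fls_fps_transpose_mult fls_fps_transpose_power
        fls_fps_transpose_sqrt_wp_z wp_z_sqrt_transposed_square)
  also have "\<dots> = wp_z_sqrt_transposed ^ (2 * k + 1)"
    by (simp only: power_add power_mult power_one_right)
  finally have "LHS k $ n = fls_nth ((wp_z_sqrt_transposed ^ (2 * k + 1)) $ n) (-1)"
    by (simp add: LHS_def fls_residue_def flip: fls_fps_transpose_nth)
  also have "\<dots> = residue_coeff wp_tail k n"
    using z_side.residue_sqrt_series_odd_power[OF wp_tail_nth_0 assms]
    by (simp add: wp_z_sqrt_transposed_def)
  finally show ?thesis .
qed

theorem proposition3p5:
  fixes k :: nat
  shows "\<forall>n \<le> k. fps_nth (LHS k) n = fps_nth (RHS k) n"
  by (simp add: LHS_nth RHS_nth)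

end
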